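(* There is a function $\rho(\theta)$ with $\rho(\theta)\to1/3$ as $\theta\to0$ such that on every instance with largeness ratio $\theta$, the winning set $\chi_k$ selected by the polynomial-time mechanism described in the context satisfies $F(\chi_k)\ge\rho(\theta)F^\star$; i.e., the mechanism has approximation ratio $1/3$ in large markets.
   Context: Sellers $S=\{1,\dots,n\}$ each own one indivisible item and have a cost $c_i\ge0$. The buyer's utility is a monotone submodular $F:2^S\to\mathbb R_{\ge0}$, budget $B>0$; $c(T)=\sum_{i\in T}c_i$. $F^\star=\max\{F(T):c(T)\le B\}>0$; the largeness ratio is $\theta=\max_{s}F(\{s\})/F^\star$. Greedy sequence $\chi(F)=\langle x_1,\dots,x_n\rangle$: with $\chi_0=\emptyset$, $\chi_i=\{x_1,\dots,x_i\}$, $x_i$ maximizes $(F(\chi_{i-1}\cup\{s\})-F(\chi_{i-1}))/c_s$ over $s\notin\chi_{i-1}$ (ratio $+\infty$ if $c_s=0$; ties arbitrary); $\partial_i=F(\chi_i)-F(\chi_{i-1})$. Mechanism (winner selection): construct $\chi(F)$, let $k$ be the largest integer such that $F(\chi_k)\cdot c_{x_k}/\partial_k\le B/2$, and declare $\chi_k$ the set of winners. *)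

theory Defs
  imports "HOL-Analysis.Analysis"
begin

text \<open>Sellers are S = {1..n}. Sets of sellers are nat sets; F is only
constrained on subsets of S.\<close>

definition sellers :: "nat \<Rightarrow> nat set" where
  "sellers n = {1..n}"

definition cost :: "(nat \<Rightarrow> real) \<Rightarrow> nat set \<Rightarrow> real" where
  "cost c T = (\<Sum>i\<in>T. c i)"

definition monotone_submodular :: "nat set \<Rightarrow> (nat set \<Rightarrow> real) \<Rightarrow> bool" where
  "monotone_submodular S F \<longleftrightarrow>
     (\<forall>T. T \<subseteq> S \<longrightarrow> F T \<ge> 0) \<and>
     (\<forall>A B. A \<subseteq> B \<and> B \<subseteq> S \<longrightarrow> F A \<le> F B) \<and>
     (\<forall>A B s. A \<subseteq> B \<and> B \<subseteq> S \<and> s \<in> S - B \<longrightarrow>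
        F (B \<union> {s}) - F B \<le> F (A \<union> {s}) - F A)"

definition Fstar :: "nat set \<Rightarrow> (nat \<Rightarrow> real) \<Rightarrow> (nat set \<Rightarrow> real) \<Rightarrow> real \<Rightarrow> real" where
  "Fstar S c F B = Max {F T | T. T \<subseteq> S \<and> cost c T \<le> B}"

definition largeness :: "nat set \<Rightarrow> (nat \<Rightarrow> real) \<Rightarrow> (nat set \<Rightarrow> real) \<Rightarrow> real \<Rightarrow> real" where
  "largeness S c F B = Max ((\<lambda>s. F {s}) ` S) / Fstar S c F B"

definition gain_ratio :: "(nat \<Rightarrow> real) \<Rightarrow> (nat set \<Rightarrow> real) \<Rightarrow> nat set \<Rightarrow> nat \<Rightarrow> ereal" where
  "gain_ratio c F A s =
     (if c s = 0 then \<infinity> else ereal ((F (A \<union> {s}) - F A) / c s))"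

definition chi :: "(nat \<Rightarrow> nat) \<Rightarrow> nat \<Rightarrow> nat set" where
  "chi x i = x ` {1..i}"

definition delta :: "(nat set \<Rightarrow> real) \<Rightarrow> (nat \<Rightarrow> nat) \<Rightarrow> nat \<Rightarrow> real" where
  "delta F x i = F (chi x i) - F (chi x (i - 1))"

definition greedy_seq :: "nat \<Rightarrow> (nat \<Rightarrow> real) \<Rightarrow> (nat set \<Rightarrow> real) \<Rightarrow> (nat \<Rightarrow> nat) \<Rightarrow> bool" where
  "greedy_seq n c F x \<longleftrightarrow>
     bij_betw x {1..n} (sellers n) \<and>
     (\<forall>i\<in>{1..n}. \<forall>s \<in> sellers n - chi x (i - 1).
        gain_ratio c F (chi x (i - 1)) s \<le> gain_ratio c F (chi x (i - 1)) (x i))"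

text \<open>Stopping condition F(chi_k) c_{x_k} / partial_k \<le> B/2 (the ratio is read
as +\<infinity>, i.e. the condition fails, when partial_k = 0).\<close>
definition stop_ok :: "(nat \<Rightarrow> real) \<Rightarrow> (nat set \<Rightarrow> real) \<Rightarrow> real \<Rightarrow> (nat \<Rightarrow> nat) \<Rightarrow> nat \<Rightarrow> bool" where
  "stop_ok c F B x k \<longleftrightarrow>
     delta F x k > 0 \<and> F (chi x k) * c (x k) / delta F x k \<le> B / 2"

text \<open>k is the largest index in {1..n} satisfying the condition (k = 0, i.e. no
winners, if no index does).\<close>
definition mech_index :: "nat \<Rightarrow> (nat \<Rightarrow> real) \<Rightarrow> (nat set \<Rightarrow> real) \<Rightarrow> real \<Rightarrow> (nat \<Rightarrow> nat) \<Rightarrow> nat" where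
  "mech_index n c F B x = Max ({0} \<union> {k \<in> {1..n}. stop_ok c F B x k})"

end

theory Submission
  imports Defs
begin

text \<open>Let \<open>i\<close> be the first index after the winning prefix \<open>\<chi>\<^sub>k\<close> whose seller has positive
cost; the free sellers in between add nothing, since a positive gain at zero cost would
satisfy the stopping rule. Write \<open>r = \<partial>\<^sub>i / c(x\<^sub>i)\<close>. By the greedy choice every seller
outside \<open>\<chi>\<^sub>i\<^sub>-\<^sub>1\<close> has marginal gain at most \<open>r\<close> per unit of cost, so submodularity gives
\<open>F\<^sup>\<star> \<le> F(\<chi>\<^sub>k) + r B\<close>. Since \<open>i\<close> violates the stopping rule, \<open>r B < 2 F(\<chi>\<^sub>i) \<le>
2 F(\<chi>\<^sub>k) + 2 \<theta> F\<^sup>\<star>\<close>. Hence \<open>F(\<chi>\<^sub>k) \<ge> (1 - 2\<theta>) F\<^sup>\<star> / 3\<close>.\<close>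

lemma monotone_submodular_nonneg:
  "monotone_submodular S F \<Longrightarrow> T \<subseteq> S \<Longrightarrow> F T \<ge> 0"
  unfolding monotone_submodular_def by blast

lemma monotone_submodular_mono:
  "monotone_submodular S F \<Longrightarrow> A \<subseteq> B \<Longrightarrow> B \<subseteq> S \<Longrightarrow> F A \<le> F B"
  unfolding monotone_submodular_def by blast

lemma monotone_submodular_diminishing:
  "monotone_submodular S F \<Longrightarrow> A \<subseteq> B \<Longrightarrow> B \<subseteq> S \<Longrightarrow> s \<in> S - B \<Longrightarrow>
     F (B \<union> {s}) - F B \<le> F (A \<union> {s}) - F A"
  unfolding monotone_submodular_def by blast

lemma submodular_le_sum_marginals:
  assumes ms: "monotone_submodular S F" and "A \<subseteq> S" "finite T" "T \<subseteq> S"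
  shows "F (A \<union> T) \<le> F A + (\<Sum>s\<in>T - A. F (A \<union> {s}) - F A)"
  using \<open>finite T\<close> \<open>T \<subseteq> S\<close>
proof (induction T rule: finite_induct)
  case empty
  then show ?case by simp
next
  case (insert t T)
  then have IH: "F (A \<union> T) \<le> F A + (\<Sum>s\<in>T - A. F (A \<union> {s}) - F A)" by simp
  show ?case
  proof (cases "t \<in> A")
    case True
    then have "A \<union> insert t T = A \<union> T" "insert t T - A = T - A" by auto
    then show ?thesis using IH by simp
  next
    case False
    have "F ((A \<union> T) \<union> {t}) - F (A \<union> T) \<le> F (A \<union> {t}) - F A"
      using insert False \<open>A \<subseteq> S\<close> by (intro monotone_submodular_diminishing[OF ms]) auto
    moreover have "insert t T - A = insert t (T - A)" "A \<union> insert t T = (A \<union> T) \<union> {t}"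
      using False by auto
    ultimately show ?thesis using IH insert by simp
  qed
qed

lemma Fstar_attained:
  assumes "finite S" "B \<ge> 0"
  obtains T where "T \<subseteq> S" "cost c T \<le> B" "Fstar S c F B = F T"
proof -
  have "finite {F T | T. T \<subseteq> S \<and> cost c T \<le> B}" using \<open>finite S\<close> by simp
  moreover have "F {} \<in> {F T | T. T \<subseteq> S \<and> cost c T \<le> B}"
    using \<open>B \<ge> 0\<close> by (auto simp: cost_def)
  ultimately have "Fstar S c F B \<in> {F T | T. T \<subseteq> S \<and> cost c T \<le> B}"
    unfolding Fstar_def by (intro Max_in) auto
  then show ?thesis using that by blast
qed

lemma chi_eq_insert: "i \<ge> 1 \<Longrightarrow> chi x i = insert (x i) (chi x (i - 1))"
  by (cases i) (auto simp: chi_def atLeastAtMostSuc_conv)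

lemma F_chi_eq_if_delta_zero:
  assumes "k \<le> m" "\<And>j. k < j \<Longrightarrow> j \<le> m \<Longrightarrow> delta F x j = 0"
  shows "F (chi x m) = F (chi x k)"
  using assms
proof (induction m rule: dec_induct)
  case (step m)
  then show ?case by (simp add: delta_def)
qed simp

locale greedy_run =
  fixes n :: nat and c :: "nat \<Rightarrow> real" and F :: "nat set \<Rightarrow> real" and B :: real
    and x :: "nat \<Rightarrow> nat"
  assumes n_pos: "n \<ge> 1"
    and B_pos: "B > 0"
    and cost_nonneg: "\<forall>i\<in>sellers n. c i \<ge> 0"
    and submod: "monotone_submodular (sellers n) F"
    and greedy: "greedy_seq n c F x"
begin

abbreviation "S \<equiv> sellers n"
abbreviation "k \<equiv> mech_index n c F B x"

lemma finite_sellers: "finite S"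
  by (simp add: sellers_def)

lemma bij_x: "bij_betw x {1..n} S"
  using greedy by (simp add: greedy_seq_def)

lemma x_in_sellers: "i \<in> {1..n} \<Longrightarrow> x i \<in> S"
  using bij_x bij_betwE by blast

lemma chi_subset_sellers: "i \<le> n \<Longrightarrow> chi x i \<subseteq> S"
  unfolding chi_def using x_in_sellers by auto

lemma chi_n: "chi x n = S"
  unfolding chi_def using bij_x bij_betw_imp_surj_on by blast

lemma x_notin_chi_pred:
  assumes i: "i \<in> {1..n}"
  shows "x i \<notin> chi x (i - 1)"
proof
  assume "x i \<in> chi x (i - 1)"
  then obtain j where j: "j \<in> {1..i - 1}" "x j = x i" by (auto simp: chi_def)
  moreover from j i have "j \<in> {1..n}" by auto
  ultimately have "j = i" using inj_onD[OF bij_betw_imp_inj_on[OF bij_x] _ _ i] by blast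
  with j show False by auto
qed

lemma delta_eq_marginal:
  "i \<ge> 1 \<Longrightarrow> delta F x i = F (chi x (i - 1) \<union> {x i}) - F (chi x (i - 1))"
  unfolding delta_def by (simp add: chi_eq_insert)

lemma delta_nonneg:
  assumes "i \<in> {1..n}"
  shows "delta F x i \<ge> 0"
proof -
  have "F (chi x (i - 1)) \<le> F (chi x i)"
    using assms chi_eq_insert[of i x] chi_subset_sellers[of i]
    by (intro monotone_submodular_mono[OF submod]) auto
  then show ?thesis by (simp add: delta_def)
qed

lemma delta_le_max_singleton:
  assumes "i \<in> {1..n}"
  shows "delta F x i \<le> Max ((\<lambda>s. F {s}) ` S)"
proof -
  have "delta F x i = F (chi x (i - 1) \<union> {x i}) - F (chi x (i - 1))"
    using assms by (simp add: delta_eq_marginal)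
  also have "\<dots> \<le> F ({} \<union> {x i}) - F {}"
    using assms x_in_sellers[OF assms] x_notin_chi_pred[OF assms]
    by (intro monotone_submodular_diminishing[OF submod] chi_subset_sellers) auto
  also have "\<dots> \<le> F {x i}"
    using monotone_submodular_nonneg[OF submod, of "{}"] by simp
  also have "\<dots> \<le> Max ((\<lambda>s. F {s}) ` S)"
    using assms finite_sellers x_in_sellers by simp
  finally show ?thesis .
qed

lemma max_singleton_nonneg: "Max ((\<lambda>s. F {s}) ` S) \<ge> 0"
  using delta_nonneg[of 1] delta_le_max_singleton[of 1] n_pos by fastforce

text \<open>A free seller \<open>s\<close> cannot occur below: its ratio \<open>\<infinity>\<close> would beat the greedy
choice \<open>x\<^sub>i\<close>, whose ratio is finite.\<close>

lemma greedy_marginal_le_rate: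
  assumes i: "i \<in> {1..n}" and cxi: "c (x i) > 0" and s: "s \<in> S - chi x (i - 1)"
  shows "F (chi x (i - 1) \<union> {s}) - F (chi x (i - 1)) \<le> delta F x i / c (x i) * c s"
proof -
  let ?A = "chi x (i - 1)"
  have "gain_ratio c F ?A s \<le> gain_ratio c F ?A (x i)"
    using greedy i s by (simp add: greedy_seq_def)
  also have "\<dots> = ereal (delta F x i / c (x i))"
    using cxi i by (simp add: gain_ratio_def delta_eq_marginal)
  finally have ratio: "gain_ratio c F ?A s \<le> ereal (delta F x i / c (x i))" .
  then have "c s \<noteq> 0" by (auto simp: gain_ratio_def)
  with cost_nonneg s have "c s > 0" by force
  with ratio show ?thesis by (simp add: gain_ratio_def divide_le_eq)
qed

lemma Fstar_le_prefix_plus_rate: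
  assumes i: "i \<in> {1..n}" and cxi: "c (x i) > 0"
  shows "Fstar S c F B \<le> F (chi x (i - 1)) + delta F x i / c (x i) * B"
proof -
  let ?A = "chi x (i - 1)" and ?r = "delta F x i / c (x i)"
  obtain T where T: "T \<subseteq> S" "cost c T \<le> B" "Fstar S c F B = F T"
    using Fstar_attained[OF finite_sellers] B_pos by (metis less_eq_real_def)
  have A: "?A \<subseteq> S" using i by (intro chi_subset_sellers) auto
  have finT: "finite T" using T(1) finite_sellers finite_subset by blast
  have r: "?r \<ge> 0" using delta_nonneg[OF i] cxi by simp
  have "F T \<le> F (?A \<union> T)"
    using A T(1) by (intro monotone_submodular_mono[OF submod]) auto
  also have "\<dots> \<le> F ?A + (\<Sum>s\<in>T - ?A. F (?A \<union> {s}) - F ?A)"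
    using submodular_le_sum_marginals[OF submod A finT T(1)] .
  also have "\<dots> \<le> F ?A + (\<Sum>s\<in>T - ?A. ?r * c s)"
    using T(1) by (intro add_left_mono sum_mono greedy_marginal_le_rate[OF i cxi]) auto
  also have "\<dots> = F ?A + ?r * cost c (T - ?A)"
    by (simp add: cost_def sum_distrib_left)
  also have "\<dots> \<le> F ?A + ?r * B"
  proof -
    have "cost c (T - ?A) \<le> cost c T"
      unfolding cost_def using finT T(1) cost_nonneg by (intro sum_mono2) auto
    then have "?r * cost c (T - ?A) \<le> ?r * B"
      using T(2) r by (intro mult_left_mono) auto
    then show ?thesis by simp
  qed
  finally show ?thesis using T(3) by simp
qed

lemma mech_index_le_n: "k \<le> n"
proof -
  have "k \<in> {0} \<union> {j \<in> {1..n}. stop_ok c F B x j}"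
    unfolding mech_index_def by (intro Max_in) auto
  then show ?thesis by auto
qed

lemma mech_value_nonneg: "F (chi x k) \<ge> 0"
  using mech_index_le_n chi_subset_sellers by (simp add: monotone_submodular_nonneg[OF submod])

lemma not_stop_ok_above_mech_index: "k < j \<Longrightarrow> j \<le> n \<Longrightarrow> \<not> stop_ok c F B x j"
proof
  assume "k < j" "j \<le> n" "stop_ok c F B x j"
  then have "j \<le> k" unfolding mech_index_def by (intro Max_ge) auto
  with \<open>k < j\<close> show False by simp
qed

lemma delta_zero_above_mech_index_if_free:
  assumes "k < j" "j \<le> n" "c (x j) = 0"
  shows "delta F x j = 0"
  using not_stop_ok_above_mech_index[OF assms(1,2)] delta_nonneg[of j] assms B_pos
  by (auto simp: stop_ok_def)

lemma F_chi_eq_mech_value_if_free: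
  assumes "k \<le> m" "m \<le> n" "\<And>j. k < j \<Longrightarrow> j \<le> m \<Longrightarrow> c (x j) = 0"
  shows "F (chi x m) = F (chi x k)"
  using assms by (intro F_chi_eq_if_delta_zero delta_zero_above_mech_index_if_free) auto

lemma Fstar_le_mech_value_if_no_paid_seller_left:
  assumes "\<And>j. k < j \<Longrightarrow> j \<le> n \<Longrightarrow> c (x j) = 0"
  shows "Fstar S c F B \<le> F (chi x k)"
proof -
  obtain T where T: "T \<subseteq> S" "Fstar S c F B = F T"
    using Fstar_attained[OF finite_sellers] B_pos by (metis less_eq_real_def)
  have "F T \<le> F (chi x n)"
    using T(1) chi_n by (simp add: monotone_submodular_mono[OF submod])
  also have "\<dots> = F (chi x k)"
    using assms mech_index_le_n by (intro F_chi_eq_mech_value_if_free) auto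
  finally show ?thesis using T(2) by simp
qed

lemma Fstar_le_mech_value_if_paid_seller_left:
  assumes i: "k < i" "i \<le> n" "c (x i) > 0"
    and free: "\<And>j. k < j \<Longrightarrow> j < i \<Longrightarrow> c (x j) = 0"
  shows "Fstar S c F B \<le> 3 * F (chi x k) + 2 * Max ((\<lambda>s. F {s}) ` S)"
proof -
  let ?r = "delta F x i / c (x i)" and ?M = "Max ((\<lambda>s. F {s}) ` S)"
  have i1: "i \<in> {1..n}" using i by auto
  have prefix: "F (chi x (i - 1)) = F (chi x k)"
    using i free by (intro F_chi_eq_mech_value_if_free) auto
  have bound: "Fstar S c F B \<le> F (chi x k) + ?r * B"
    using Fstar_le_prefix_plus_rate[OF i1 i(3)] prefix by simp
  have "?r * B \<le> 2 * F (chi x k) + 2 * ?M"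
  proof (cases "delta F x i = 0")
    case True
    then show ?thesis using mech_value_nonneg max_singleton_nonneg by simp
  next
    case False
    then have "delta F x i > 0" using delta_nonneg[OF i1] by simp
    then have "B / 2 < F (chi x i) / ?r" "?r > 0"
      using not_stop_ok_above_mech_index[OF i(1,2)] i(3) by (auto simp: stop_ok_def)
    then have "B / 2 * ?r < F (chi x i)"
      by (simp only: pos_less_divide_eq)
    moreover have "?r * B = 2 * (B / 2 * ?r)" by simp
    moreover have "F (chi x i) = F (chi x k) + delta F x i"
      using prefix by (simp add: delta_def)
    ultimately show ?thesis using delta_le_max_singleton[OF i1] by linarith
  qed
  with bound show ?thesis by linarith
qed

theorem Fstar_le_mech_value:
  "Fstar S c F B \<le> 3 * F (chi x k) + 2 * Max ((\<lambda>s. F {s}) ` S)"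
proof (cases "\<exists>i. k < i \<and> i \<le> n \<and> c (x i) > 0")
  case True
  define i where "i = (LEAST i. k < i \<and> i \<le> n \<and> c (x i) > 0)"
  have i: "k < i" "i \<le> n" "c (x i) > 0"
    using LeastI_ex[OF True] unfolding i_def by auto
  have "c (x j) = 0" if "k < j" "j < i" for j
    using not_less_Least[of j "\<lambda>i. k < i \<and> i \<le> n \<and> c (x i) > 0"] that i
      cost_nonneg x_in_sellers[of j] unfolding i_def by force
  then show ?thesis using Fstar_le_mech_value_if_paid_seller_left[OF i] by blast
next
  case False
  then have "c (x j) = 0" if "k < j" "j \<le> n" for j
    using that cost_nonneg x_in_sellers[of j] by force
  then have "Fstar S c F B \<le> F (chi x k)"
    by (rule Fstar_le_mech_value_if_no_paid_seller_left)
  with mech_value_nonneg max_singleton_nonneg show ?thesis by linarith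
qed

end

theorem lemma21:
  "\<exists>\<rho> :: real \<Rightarrow> real. (\<rho> \<longlongrightarrow> 1/3) (at_right 0) \<and>
     (\<forall>(n::nat) (c::nat \<Rightarrow> real) (F::nat set \<Rightarrow> real) (B::real) (x::nat \<Rightarrow> nat).
        n \<ge> 1 \<and> B > 0 \<and> (\<forall>i\<in>sellers n. c i \<ge> 0) \<and>
        monotone_submodular (sellers n) F \<and> Fstar (sellers n) c F B > 0 \<and>
        greedy_seq n c F x
        \<longrightarrow> F (chi x (mech_index n c F B x))
              \<ge> \<rho> (largeness (sellers n) c F B) * Fstar (sellers n) c F B)"
proof (intro exI[of _ "\<lambda>t. (1 - 2 * t) / 3"] conjI allI impI)
  have "((\<lambda>t::real. (1 - 2 * t) / 3) \<longlongrightarrow> (1 - 2 * 0) / 3) (at_right 0)"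
    by (intro tendsto_intros) auto
  then show "((\<lambda>t::real. (1 - 2 * t) / 3) \<longlongrightarrow> 1/3) (at_right 0)" by simp
next
  fix n c F B x
  assume hyps: "n \<ge> 1 \<and> B > 0 \<and> (\<forall>i\<in>sellers n. c i \<ge> 0) \<and>
    monotone_submodular (sellers n) F \<and> Fstar (sellers n) c F B > 0 \<and> greedy_seq n c F x"
  then interpret greedy_run n c F B x by unfold_locales auto
  have "largeness S c F B * Fstar S c F B = Max ((\<lambda>s. F {s}) ` S)"
    using hyps by (simp add: largeness_def)
  with Fstar_le_mech_value
  show "(1 - 2 * largeness S c F B) / 3 * Fstar S c F B \<le> F (chi x k)"
    by (simp add: algebra_simps)
qed

end
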